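(* Let $\mathbb K$ be an algebraically closed field of characteristic $0$. Let $\sigma=\sum_{i=1}^r\omega_i\mathbf e_{\xi_i}(\mathbf y)$ with $\omega_i\in\mathbb K\setminus\{0\}$ and $\xi_1,\dots,\xi_r\in\mathbb K^n$ pairwise distinct. Let $g\in\mathbb K[\mathbf x]$ separate the points, i.e. $g(\xi_i)\ne g(\xi_j)$ for $i\ne j$. Then for each $i$, the set of $v\in\mathcal A_\sigma$ with $\mathcal H_{g\star\sigma}(v)=g(\xi_i)\mathcal H_\sigma(v)$ is one dimensional. For any nonzero such $v_i$ ($i=1,\dots,r$), the elements $v_1,\dots,v_r$ are linearly independent, $v_i(\xi_i)\ne0$, and $$\langle\sigma\mid x_jv_i\rangle=\xi_{i,j}\,\langle\sigma\mid v_i\rangle\quad(j=1,\dots,n,\ i=1,\dots,r),$$ $$\sigma(\mathbf y)=\sum_{i=1}^r\frac{\langle\sigma\mid v_i\rangle}{v_i(\xi_i)}\,\mathbf e_{\xi_i}(\mathbf y).$$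
   Context: $\mathbb K[[\mathbf y]]$ is identified with the dual of $\mathbb K[\mathbf x]$ via $\langle\mathbf y^\alpha\mid\mathbf x^\beta\rangle=\alpha!\,\delta_{\alpha\beta}$. $p\star\sigma$ is defined by $\langle p\star\sigma\mid q\rangle=\langle\sigma\mid pq\rangle$. $I_\sigma=\ker(p\mapsto p\star\sigma)$ and $\mathcal A_\sigma=\mathbb K[\mathbf x]/I_\sigma$. $\mathcal H_\sigma:\mathcal A_\sigma\to\mathcal A_\sigma^*\cong I_\sigma^\perp$ is $p\mapsto p\star\sigma$, and $\mathcal H_{g\star\sigma}(p)=(gp)\star\sigma$. Values $v(\xi_i)$ and $\langle\sigma\mid v\rangle$ are well defined for $v\in\mathcal A_\sigma$, since $\xi_i$ is a common zero of $I_\sigma$ and $\sigma$ vanishes on $I_\sigma$. $\mathbf e_\xi(\mathbf y)=\exp(\sum_j\xi_jy_j)$, and $\xi_{i,j}$ is the $j$-th coordinate of $\xi_i$. *)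

theory Defs
  imports "HOL-Computational_Algebra.Polynomial" "HOL-Library.Poly_Mapping"
begin

text \<open>Formal power series K[[y]] as arbitrary coefficient functions on monomials.\<close>

type_synonym ('n, 'a) mpoly = "('n \<Rightarrow>\<^sub>0 nat) \<Rightarrow>\<^sub>0 'a"
type_synonym ('n, 'a) fps_y = "('n \<Rightarrow>\<^sub>0 nat) \<Rightarrow> 'a"

definition mfact :: "('n \<Rightarrow>\<^sub>0 nat) \<Rightarrow> nat" where
  "mfact \<alpha> = (\<Prod>j\<in>Poly_Mapping.keys \<alpha>. fact (Poly_Mapping.lookup \<alpha> j))"

definition mmono :: "('n \<Rightarrow>\<^sub>0 nat) \<Rightarrow> ('n, 'a::comm_ring_1) mpoly" where
  "mmono \<alpha> = Poly_Mapping.single \<alpha> 1"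

definition mvar :: "'n \<Rightarrow> ('n, 'a::comm_ring_1) mpoly" where
  "mvar j = mmono (Poly_Mapping.single j 1)"

definition mconst :: "'a::comm_ring_1 \<Rightarrow> ('n, 'a) mpoly" where
  "mconst c = Poly_Mapping.single 0 c"

definition meval :: "('n, 'a::comm_ring_1) mpoly \<Rightarrow> ('n \<Rightarrow> 'a) \<Rightarrow> 'a" where
  "meval p \<xi> = (\<Sum>\<alpha>\<in>Poly_Mapping.keys p. Poly_Mapping.lookup p \<alpha> * (\<Prod>j\<in>Poly_Mapping.keys \<alpha>. \<xi> j ^ Poly_Mapping.lookup \<alpha> j))"

text \<open>Pairing  <y^a | x^b> = a! delta_ab.\<close>
definition pairing :: "('n, 'a::field_char_0) fps_y \<Rightarrow> ('n, 'a) mpoly \<Rightarrow> 'a" where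
  "pairing \<sigma> p = (\<Sum>\<alpha>\<in>Poly_Mapping.keys p. \<sigma> \<alpha> * of_nat (mfact \<alpha>) * Poly_Mapping.lookup p \<alpha>)"

text \<open>p \<star> \<sigma>, characterised by <p \<star> \<sigma> | q> = <\<sigma> | p q>.\<close>
definition star :: "('n, 'a::field_char_0) mpoly \<Rightarrow> ('n, 'a) fps_y \<Rightarrow> ('n, 'a) fps_y" where
  "star p \<sigma> = (\<lambda>\<alpha>. pairing \<sigma> (p * mmono \<alpha>) / of_nat (mfact \<alpha>))"

text \<open>Hankel operator H_\<sigma>(p) = p \<star> \<sigma> (on representatives of A_\<sigma>).\<close>
definition hankel :: "('n, 'a::field_char_0) fps_y \<Rightarrow> ('n, 'a) mpoly \<Rightarrow> ('n, 'a) fps_y" where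
  "hankel \<sigma> p = star p \<sigma>"

definition I_sigma :: "('n, 'a::field_char_0) fps_y \<Rightarrow> ('n, 'a) mpoly set" where
  "I_sigma \<sigma> = {p. star p \<sigma> = (\<lambda>_. 0)}"

text \<open>Exponential series e_\<xi>(y) = exp(\<Sum>_j \<xi>_j y_j).\<close>
definition exp_y :: "('n \<Rightarrow> 'a::field_char_0) \<Rightarrow> ('n, 'a) fps_y" where
  "exp_y \<xi> = (\<lambda>\<alpha>. (\<Prod>j\<in>Poly_Mapping.keys \<alpha>. \<xi> j ^ Poly_Mapping.lookup \<alpha> j) / of_nat (mfact \<alpha>))"

end

theory Submission imports Defs begin

text \<open>Everything reduces to evaluation at the points \<open>\<xi>\<^sub>k\<close>: pairing with
  \<open>\<sigma> = \<Sum>\<^sub>k \<omega>\<^sub>k e\<^bsub>\<xi>\<^sub>k\<^esub>\<close> is \<open>p \<mapsto> \<Sum>\<^sub>k \<omega>\<^sub>k p(\<xi>\<^sub>k)\<close>, and \<open>p \<star> \<sigma> = \<Sum>\<^sub>k \<omega>\<^sub>k p(\<xi>\<^sub>k) e\<^bsub>\<xi>\<^sub>k\<^esub>\<close>.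
  Since Lagrange polynomials separate distinct points, such exponential sums determine their
  coefficients. Hence \<open>p \<in> I\<^sub>\<sigma>\<close> iff \<open>p\<close> vanishes at every \<open>\<xi>\<^sub>k\<close>, and the generalized
  eigenvalue equation for \<open>g(\<xi>\<^sub>i)\<close> says \<open>(g(\<xi>\<^sub>k) - g(\<xi>\<^sub>i)) p(\<xi>\<^sub>k) = 0\<close> for all \<open>k\<close>, i.e. that \<open>p\<close>
  vanishes at \<open>\<xi>\<^sub>k\<close> for \<open>k \<noteq> i\<close>. So the eigenvectors are, modulo \<open>I\<^sub>\<sigma>\<close>, the multiples of
  the \<open>i\<close>-th Lagrange polynomial, and all remaining claims follow by evaluating.\<close>

definition mon_eval :: "('n \<Rightarrow>\<^sub>0 nat) \<Rightarrow> ('n \<Rightarrow> 'a::comm_ring_1) \<Rightarrow> 'a" where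
  "mon_eval \<alpha> \<xi> = (\<Prod>j\<in>Poly_Mapping.keys \<alpha>. \<xi> j ^ Poly_Mapping.lookup \<alpha> j)"

lemma mon_eval_superset:
  assumes "finite S" "Poly_Mapping.keys \<alpha> \<subseteq> S"
  shows "mon_eval \<alpha> \<xi> = (\<Prod>j\<in>S. \<xi> j ^ Poly_Mapping.lookup \<alpha> j)"
  unfolding mon_eval_def using assms
  by (intro prod.mono_neutral_left) (auto simp: in_keys_iff)

lemma mon_eval_add: "mon_eval (\<alpha> + \<beta>) \<xi> = mon_eval \<alpha> \<xi> * mon_eval \<beta> \<xi>"
proof -
  let ?S = "Poly_Mapping.keys \<alpha> \<union> Poly_Mapping.keys \<beta>"
  have "mon_eval (\<alpha> + \<beta>) \<xi> = (\<Prod>j\<in>?S. \<xi> j ^ Poly_Mapping.lookup (\<alpha> + \<beta>) j)"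
    using keys_add[of \<alpha> \<beta>] by (intro mon_eval_superset) auto
  also have "\<dots> = (\<Prod>j\<in>?S. \<xi> j ^ Poly_Mapping.lookup \<alpha> j) * (\<Prod>j\<in>?S. \<xi> j ^ Poly_Mapping.lookup \<beta> j)"
    by (simp add: lookup_add power_add prod.distrib)
  also have "\<dots> = mon_eval \<alpha> \<xi> * mon_eval \<beta> \<xi>"
    by (simp add: mon_eval_superset[of ?S])
  finally show ?thesis .
qed

lemma mon_eval_single_one: "mon_eval (Poly_Mapping.single j 1) \<xi> = \<xi> j"
proof -
  have "Poly_Mapping.keys (Poly_Mapping.single j (1::nat)) = {j}" by simp
  then show ?thesis by (simp add: mon_eval_def)
qed

lemma meval_superset:
  assumes "finite S" "Poly_Mapping.keys p \<subseteq> S"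
  shows "meval p \<xi> = (\<Sum>\<alpha>\<in>S. Poly_Mapping.lookup p \<alpha> * mon_eval \<alpha> \<xi>)"
  unfolding meval_def mon_eval_def using assms
  by (intro sum.mono_neutral_left) (auto simp: in_keys_iff)

lemma meval_single: "meval (Poly_Mapping.single \<alpha> a) \<xi> = a * mon_eval \<alpha> \<xi>"
  by (simp add: meval_def mon_eval_def)

lemma meval_zero [simp]: "meval 0 \<xi> = 0"
  by (simp add: meval_def)

lemma meval_one [simp]: "meval 1 \<xi> = 1"
  using meval_single[of 0 1 \<xi>] by (simp add: mon_eval_def)

lemma meval_add: "meval (p + q) \<xi> = meval p \<xi> + meval q \<xi>"
proof -
  let ?S = "Poly_Mapping.keys p \<union> Poly_Mapping.keys q"
  have "meval (p + q) \<xi> = (\<Sum>\<alpha>\<in>?S. Poly_Mapping.lookup (p + q) \<alpha> * mon_eval \<alpha> \<xi>)"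
    using keys_add[of p q] by (intro meval_superset) auto
  also have "\<dots> = meval p \<xi> + meval q \<xi>"
    by (simp add: lookup_add distrib_right sum.distrib meval_superset[of ?S])
  finally show ?thesis .
qed

lemma meval_diff: "meval (p - q) \<xi> = meval p \<xi> - meval q \<xi>"
  using meval_add[of "p - q" q \<xi>] by simp

lemma meval_sum: "meval (\<Sum>i\<in>A. f i) \<xi> = (\<Sum>i\<in>A. meval (f i) \<xi>)"
  by (induction A rule: infinite_finite_induct) (auto simp: meval_add)

lemma poly_mapping_sum_single:
  "p = (\<Sum>\<alpha>\<in>Poly_Mapping.keys p. Poly_Mapping.single \<alpha> (Poly_Mapping.lookup p \<alpha>))"
  by (rule poly_mapping_eqI) (auto simp: lookup_sum lookup_single when_def in_keys_iff)

lemma meval_mult: "meval (p * q) \<xi> = meval p \<xi> * meval q \<xi>"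
proof -
  let ?A = "Poly_Mapping.keys p" and ?B = "Poly_Mapping.keys q"
  have "p * q = (\<Sum>\<alpha>\<in>?A. \<Sum>\<beta>\<in>?B.
      Poly_Mapping.single (\<alpha> + \<beta>) (Poly_Mapping.lookup p \<alpha> * Poly_Mapping.lookup q \<beta>))"
    by (subst poly_mapping_sum_single[of p], subst poly_mapping_sum_single[of q])
       (simp add: sum_product mult_single)
  then have "meval (p * q) \<xi> = (\<Sum>\<alpha>\<in>?A. \<Sum>\<beta>\<in>?B.
      (Poly_Mapping.lookup p \<alpha> * mon_eval \<alpha> \<xi>) * (Poly_Mapping.lookup q \<beta> * mon_eval \<beta> \<xi>))"
    by (simp add: meval_sum meval_single mon_eval_add mult_ac)
  also have "\<dots> = meval p \<xi> * meval q \<xi>"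
    by (simp add: meval_def mon_eval_def sum_product)
  finally show ?thesis .
qed

lemma meval_prod: "meval (\<Prod>i\<in>A. f i) \<xi> = (\<Prod>i\<in>A. meval (f i) \<xi>)"
  by (induction A rule: infinite_finite_induct) (auto simp: meval_mult)

lemma meval_mconst [simp]: "meval (mconst c) \<xi> = c"
  by (simp add: mconst_def meval_single mon_eval_def)

lemma meval_mvar [simp]: "meval (mvar j) \<xi> = \<xi> j"
  unfolding mvar_def mmono_def meval_single mon_eval_single_one by simp

lemma meval_mmono: "meval (mmono \<alpha>) \<xi> = mon_eval \<alpha> \<xi>"
  by (simp add: mmono_def meval_single)

lemma mfact_nonzero [simp]: "mfact \<alpha> \<noteq> 0"
  by (simp add: mfact_def)

lemma exp_y_eq: "exp_y \<xi> \<alpha> = mon_eval \<alpha> \<xi> / of_nat (mfact \<alpha>)"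
  by (simp add: exp_y_def mon_eval_def)

definition exp_sum :: "nat \<Rightarrow> (nat \<Rightarrow> 'n \<Rightarrow> 'a::field_char_0) \<Rightarrow> (nat \<Rightarrow> 'a) \<Rightarrow> ('n, 'a) fps_y" where
  "exp_sum r \<xi> w = (\<lambda>\<alpha>. \<Sum>k<r. w k * exp_y (\<xi> k) \<alpha>)"

lemma pairing_exp_sum: "pairing (exp_sum r \<xi> w) p = (\<Sum>k<r. w k * meval p (\<xi> k))"
proof -
  have "exp_sum r \<xi> w \<alpha> * of_nat (mfact \<alpha>) = (\<Sum>k<r. w k * mon_eval \<alpha> (\<xi> k))" for \<alpha>
    by (simp add: exp_sum_def exp_y_eq sum_distrib_right)
  then have "pairing (exp_sum r \<xi> w) p
      = (\<Sum>\<alpha>\<in>Poly_Mapping.keys p. \<Sum>k<r. w k * (Poly_Mapping.lookup p \<alpha> * mon_eval \<alpha> (\<xi> k)))"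
    by (simp add: pairing_def sum_distrib_left mult_ac)
  also have "\<dots> = (\<Sum>k<r. w k * meval p (\<xi> k))"
    by (subst sum.swap) (simp add: meval_def mon_eval_def sum_distrib_left)
  finally show ?thesis .
qed

lemma star_exp_sum: "star p (exp_sum r \<xi> w) = exp_sum r \<xi> (\<lambda>k. w k * meval p (\<xi> k))"
  unfolding star_def pairing_exp_sum
  by (rule ext) (simp add: exp_sum_def meval_mult meval_mmono exp_y_eq sum_divide_distrib mult_ac)

lemma sum_lessThan_single:
  fixes f :: "nat \<Rightarrow> 'a::comm_monoid_add"
  assumes "m < r" "\<And>k. k < r \<Longrightarrow> k \<noteq> m \<Longrightarrow> f k = 0"
  shows "(\<Sum>k<r. f k) = f m"
  using assms by (subst sum.remove[of "{..<r}" m]) (auto intro!: sum.neutral)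

text \<open>The factor for \<open>k\<close> uses a coordinate in which \<open>\<xi>\<^sub>m\<close> and \<open>\<xi>\<^sub>k\<close> differ; for \<open>\<xi>\<^sub>m = \<xi>\<^sub>k\<close>
  the choice is arbitrary and the polynomial meaningless.\<close>

definition lagrange_basis :: "(nat \<Rightarrow> 'n \<Rightarrow> 'a::field) \<Rightarrow> nat \<Rightarrow> nat \<Rightarrow> ('n, 'a) mpoly" where
  "lagrange_basis \<xi> r m = (\<Prod>k\<in>{..<r} - {m}. let j = (SOME j. \<xi> m j \<noteq> \<xi> k j) in
     mconst (inverse (\<xi> m j - \<xi> k j)) * (mvar j - mconst (\<xi> k j)))"

lemma meval_lagrange_basis:
  assumes "inj_on \<xi> {..<r}" "m < r" "k < r"
  shows "meval (lagrange_basis \<xi> r m) (\<xi> k) = (if k = m then 1 else 0)"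
proof -
  define c where "c l = (SOME j. \<xi> m j \<noteq> \<xi> l j)" for l
  have c: "\<xi> m (c l) \<noteq> \<xi> l (c l)" if "l \<in> {..<r} - {m}" for l
  proof -
    have "\<xi> m \<noteq> \<xi> l" using assms(1,2) that by (auto dest: inj_onD)
    then have "\<exists>j. \<xi> m j \<noteq> \<xi> l j" by (auto simp: fun_eq_iff)
    then show ?thesis unfolding c_def by (rule someI_ex)
  qed
  have eval: "meval (lagrange_basis \<xi> r m) (\<xi> k)
      = (\<Prod>l\<in>{..<r} - {m}. inverse (\<xi> m (c l) - \<xi> l (c l)) * (\<xi> k (c l) - \<xi> l (c l)))"
    by (simp add: lagrange_basis_def c_def Let_def meval_prod meval_mult meval_diff)
  show ?thesis
  proof (cases "k = m")
    case True
    have "inverse (\<xi> m (c l) - \<xi> l (c l)) * (\<xi> m (c l) - \<xi> l (c l)) = 1"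
      if "l \<in> {..<r} - {m}" for l
      using c[OF that] by simp
    then show ?thesis using True by (simp add: eval[unfolded True])
  next
    case False
    with assms(3) show ?thesis by (simp add: eval) (intro prod_zero bexI[of _ k], auto)
  qed
qed

lemma exp_sum_eq_iff:
  assumes "inj_on \<xi> {..<r}"
  shows "exp_sum r \<xi> a = exp_sum r \<xi> b \<longleftrightarrow> (\<forall>k<r. a k = b k)"
proof
  assume eq: "exp_sum r \<xi> a = exp_sum r \<xi> b"
  show "\<forall>k<r. a k = b k"
  proof (intro allI impI)
    fix m assume m: "m < r"
    have "pairing (exp_sum r \<xi> a) (lagrange_basis \<xi> r m) = a m"
      "pairing (exp_sum r \<xi> b) (lagrange_basis \<xi> r m) = b m"
      using m by (simp_all add: pairing_exp_sum meval_lagrange_basis[OF assms] sum_lessThan_single)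
    with eq show "a m = b m" by simp
  qed
qed (simp add: exp_sum_def)

lemma I_sigma_exp_sum_iff:
  assumes "inj_on \<xi> {..<r}" "\<And>k. k < r \<Longrightarrow> w k \<noteq> 0"
  shows "p \<in> I_sigma (exp_sum r \<xi> w) \<longleftrightarrow> (\<forall>k<r. meval p (\<xi> k) = 0)"
proof -
  have "p \<in> I_sigma (exp_sum r \<xi> w)
      \<longleftrightarrow> exp_sum r \<xi> (\<lambda>k. w k * meval p (\<xi> k)) = exp_sum r \<xi> (\<lambda>_. 0)"
    by (simp add: I_sigma_def star_exp_sum) (simp add: exp_sum_def)
  also have "\<dots> \<longleftrightarrow> (\<forall>k<r. meval p (\<xi> k) = 0)"
    using assms(2) by (simp add: exp_sum_eq_iff[OF assms(1)])
  finally show ?thesis .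
qed

lemma hankel_eigen_exp_sum_iff:
  assumes "inj_on \<xi> {..<r}" "\<And>k. k < r \<Longrightarrow> w k \<noteq> 0"
    and "inj_on (\<lambda>k. meval g (\<xi> k)) {..<r}" "i < r"
  shows "hankel (star g (exp_sum r \<xi> w)) v = (\<lambda>\<alpha>. meval g (\<xi> i) * hankel (exp_sum r \<xi> w) v \<alpha>)
    \<longleftrightarrow> (\<forall>k<r. k \<noteq> i \<longrightarrow> meval v (\<xi> k) = 0)"
proof -
  have "(\<lambda>\<alpha>. meval g (\<xi> i) * hankel (exp_sum r \<xi> w) v \<alpha>)
      = exp_sum r \<xi> (\<lambda>k. meval g (\<xi> i) * (w k * meval v (\<xi> k)))"
    unfolding hankel_def star_exp_sum by (simp add: exp_sum_def sum_distrib_left mult_ac)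
  moreover have "hankel (star g (exp_sum r \<xi> w)) v
      = exp_sum r \<xi> (\<lambda>k. meval g (\<xi> k) * (w k * meval v (\<xi> k)))"
    by (simp add: hankel_def star_exp_sum mult_ac)
  moreover have "meval g (\<xi> k) * (w k * meval v (\<xi> k)) = meval g (\<xi> i) * (w k * meval v (\<xi> k))
      \<longleftrightarrow> (k \<noteq> i \<longrightarrow> meval v (\<xi> k) = 0)" if "k < r" for k
    using assms(2-4) that by (auto dest: inj_onD)
  ultimately show ?thesis by (simp add: exp_sum_eq_iff[OF assms(1)])
qed

lemma exp_sum_eigenvector_iff:
  assumes "inj_on \<xi> {..<r}" "\<And>k. k < r \<Longrightarrow> w k \<noteq> 0"
    and "inj_on (\<lambda>k. meval g (\<xi> k)) {..<r}" "i < r"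
  shows "(hankel (star g (exp_sum r \<xi> w)) v = (\<lambda>\<alpha>. meval g (\<xi> i) * hankel (exp_sum r \<xi> w) v \<alpha>)
      \<and> v \<notin> I_sigma (exp_sum r \<xi> w))
    \<longleftrightarrow> (\<forall>k<r. meval v (\<xi> k) = 0 \<longleftrightarrow> k \<noteq> i)"
  using assms(4) by (auto simp: hankel_eigen_exp_sum_iff[OF assms] I_sigma_exp_sum_iff[OF assms(1,2)])

lemma pairing_exp_sum_mult_vanishing:
  assumes "i < r" "\<And>k. k < r \<Longrightarrow> k \<noteq> i \<Longrightarrow> meval v (\<xi> k) = 0"
  shows "pairing (exp_sum r \<xi> w) (p * v) = w i * meval p (\<xi> i) * meval v (\<xi> i)"
  using assms by (simp add: pairing_exp_sum meval_mult sum_lessThan_single mult_ac)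

lemma exp_sum_eq_pairing_expansion:
  assumes "\<And>i k. i < r \<Longrightarrow> k < r \<Longrightarrow> meval (v i) (\<xi> k) = 0 \<longleftrightarrow> k \<noteq> i"
  shows "exp_sum r \<xi> w
    = (\<lambda>\<alpha>. \<Sum>i<r. pairing (exp_sum r \<xi> w) (v i) / meval (v i) (\<xi> i) * exp_y (\<xi> i) \<alpha>)"
proof -
  have "pairing (exp_sum r \<xi> w) (v i) / meval (v i) (\<xi> i) = w i" if "i < r" for i
    using pairing_exp_sum_mult_vanishing[of i r "v i" \<xi> w 1] assms that by simp
  then show ?thesis by (simp add: exp_sum_def)
qed

lemma lin_indep_mod_I_sigma_exp_sum:
  assumes "inj_on \<xi> {..<r}" "\<And>k. k < r \<Longrightarrow> w k \<noteq> 0"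
    and "\<And>i k. i < r \<Longrightarrow> k < r \<Longrightarrow> meval (v i) (\<xi> k) = 0 \<longleftrightarrow> k \<noteq> i"
    and "(\<Sum>i<r. mconst (c i) * v i) \<in> I_sigma (exp_sum r \<xi> w)" "m < r"
  shows "c m = 0"
proof -
  have "0 = meval (\<Sum>i<r. mconst (c i) * v i) (\<xi> m)"
    using assms(4,5) by (simp add: I_sigma_exp_sum_iff[OF assms(1,2)])
  also have "\<dots> = c m * meval (v m) (\<xi> m)"
    using assms(3,5) by (simp add: meval_sum meval_mult sum_lessThan_single)
  finally show ?thesis using assms(3,5) by simp
qed

lemma exp_sum_eigenspace_one_dim:
  assumes \<sigma>: "\<sigma> = exp_sum r \<xi> w"
    and inj: "inj_on \<xi> {..<r}" and w: "\<And>k. k < r \<Longrightarrow> w k \<noteq> 0"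
    and inj_g: "inj_on (\<lambda>k. meval g (\<xi> k)) {..<r}" and i: "i < r"
  shows "\<exists>v0. hankel (star g \<sigma>) v0 = (\<lambda>\<alpha>. meval g (\<xi> i) * hankel \<sigma> v0 \<alpha>)
    \<and> v0 \<notin> I_sigma \<sigma>
    \<and> (\<forall>v. hankel (star g \<sigma>) v = (\<lambda>\<alpha>. meval g (\<xi> i) * hankel \<sigma> v \<alpha>)
           \<longrightarrow> (\<exists>c. v - mconst c * v0 \<in> I_sigma \<sigma>))"
proof -
  note I = I_sigma_exp_sum_iff[OF inj w] and eigen = hankel_eigen_exp_sum_iff[OF inj w inj_g i]
  have "v - mconst (meval v (\<xi> i)) * lagrange_basis \<xi> r i \<in> I_sigma \<sigma>"
    if "\<forall>k<r. k \<noteq> i \<longrightarrow> meval v (\<xi> k) = 0" for v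
    using that i by (auto simp: \<sigma> I meval_diff meval_mult meval_lagrange_basis[OF inj])
  then show ?thesis
    using i by (intro exI[of _ "lagrange_basis \<xi> r i"])
      (auto simp: \<sigma> eigen I meval_lagrange_basis[OF inj])
qed

lemma exp_sum_eigenvectors:
  assumes \<sigma>: "\<sigma> = exp_sum r \<xi> w"
    and inj: "inj_on \<xi> {..<r}" and w: "\<And>k. k < r \<Longrightarrow> w k \<noteq> 0"
    and inj_g: "inj_on (\<lambda>k. meval g (\<xi> k)) {..<r}"
    and eigenvectors: "\<forall>i<r. hankel (star g \<sigma>) (v i) = (\<lambda>\<alpha>. meval g (\<xi> i) * hankel \<sigma> (v i) \<alpha>)
      \<and> v i \<notin> I_sigma \<sigma>"
  shows "(\<forall>c. (\<Sum>i<r. mconst (c i) * v i) \<in> I_sigma \<sigma> \<longrightarrow> (\<forall>i<r. c i = 0))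
    \<and> (\<forall>i<r. meval (v i) (\<xi> i) \<noteq> 0)
    \<and> (\<forall>i<r. \<forall>j. pairing \<sigma> (mvar j * v i) = \<xi> i j * pairing \<sigma> (v i))
    \<and> \<sigma> = (\<lambda>\<alpha>. \<Sum>i<r. pairing \<sigma> (v i) / meval (v i) (\<xi> i) * exp_y (\<xi> i) \<alpha>)"
proof -
  have v: "\<And>i k. i < r \<Longrightarrow> k < r \<Longrightarrow> meval (v i) (\<xi> k) = 0 \<longleftrightarrow> k \<noteq> i"
    using eigenvectors by (simp add: \<sigma> exp_sum_eigenvector_iff[OF inj w inj_g])
  have pairing_v: "pairing \<sigma> (p * v i) = w i * meval p (\<xi> i) * meval (v i) (\<xi> i)"
    if "i < r" for i p
    using pairing_exp_sum_mult_vanishing[of i r "v i" \<xi> w p] v that by (simp add: \<sigma>)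
  show ?thesis
  proof (intro conjI allI impI)
    fix c i assume "(\<Sum>i<r. mconst (c i) * v i) \<in> I_sigma \<sigma>" "i < r"
    then show "c i = 0" using lin_indep_mod_I_sigma_exp_sum[OF inj w v] by (simp add: \<sigma>)
  next
    fix i assume "i < r"
    then show "meval (v i) (\<xi> i) \<noteq> 0" using v by blast
  next
    fix i j assume "i < r"
    then show "pairing \<sigma> (mvar j * v i) = \<xi> i j * pairing \<sigma> (v i)"
      using pairing_v[of i "mvar j"] pairing_v[of i 1] by simp
  next
    show "\<sigma> = (\<lambda>\<alpha>. \<Sum>i<r. pairing \<sigma> (v i) / meval (v i) (\<xi> i) * exp_y (\<xi> i) \<alpha>)"
      using exp_sum_eq_pairing_expansion[OF v] by (simp add: \<sigma>)
  qed
qed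

theorem proposition3:
  fixes \<omega> :: "nat \<Rightarrow> 'a::{alg_closed_field, field_char_0}"
    and \<xi> :: "nat \<Rightarrow> ('n::finite \<Rightarrow> 'a)"
    and r :: nat
    and \<sigma> :: "('n, 'a) fps_y"
    and g :: "('n, 'a) mpoly"
  assumes \<sigma>_def: "\<sigma> = (\<lambda>\<alpha>. \<Sum>i<r. \<omega> i * exp_y (\<xi> i) \<alpha>)"
    and \<omega>_nz: "\<forall>i<r. \<omega> i \<noteq> 0"
    and \<xi>_dist: "\<forall>i<r. \<forall>j<r. i \<noteq> j \<longrightarrow> \<xi> i \<noteq> \<xi> j"
    and g_sep: "\<forall>i<r. \<forall>j<r. i \<noteq> j \<longrightarrow> meval g (\<xi> i) \<noteq> meval g (\<xi> j)"
  shows "(\<forall>i<r. \<exists>v0. hankel (star g \<sigma>) v0 = (\<lambda>\<alpha>. meval g (\<xi> i) * hankel \<sigma> v0 \<alpha>)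
            \<and> v0 \<notin> I_sigma \<sigma>
            \<and> (\<forall>v. hankel (star g \<sigma>) v = (\<lambda>\<alpha>. meval g (\<xi> i) * hankel \<sigma> v \<alpha>)
                   \<longrightarrow> (\<exists>c. v - mconst c * v0 \<in> I_sigma \<sigma>)))
       \<and> (\<forall>v :: nat \<Rightarrow> ('n, 'a) mpoly.
            (\<forall>i<r. hankel (star g \<sigma>) (v i) = (\<lambda>\<alpha>. meval g (\<xi> i) * hankel \<sigma> (v i) \<alpha>)
                   \<and> v i \<notin> I_sigma \<sigma>)
            \<longrightarrow> (\<forall>c. (\<Sum>i<r. mconst (c i) * v i) \<in> I_sigma \<sigma> \<longrightarrow> (\<forall>i<r. c i = 0))
              \<and> (\<forall>i<r. meval (v i) (\<xi> i) \<noteq> 0)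
              \<and> (\<forall>i<r. \<forall>j. pairing \<sigma> (mvar j * v i) = \<xi> i j * pairing \<sigma> (v i))
              \<and> \<sigma> = (\<lambda>\<alpha>. \<Sum>i<r. pairing \<sigma> (v i) / meval (v i) (\<xi> i) * exp_y (\<xi> i) \<alpha>))"
proof -
  have \<sigma>: "\<sigma> = exp_sum r \<xi> \<omega>" by (simp add: \<sigma>_def exp_sum_def)
  have inj: "inj_on \<xi> {..<r}" and inj_g: "inj_on (\<lambda>k. meval g (\<xi> k)) {..<r}"
    using \<xi>_dist g_sep unfolding inj_on_def by blast+
  have \<omega>: "\<And>k. k < r \<Longrightarrow> \<omega> k \<noteq> 0" using \<omega>_nz by blast
  show ?thesis
    using exp_sum_eigenspace_one_dim[OF \<sigma> inj \<omega> inj_g] exp_sum_eigenvectors[OF \<sigma> inj \<omega> inj_g]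
    by blast
qed

end
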